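(* Let $B$ be a Borel ideal of $S=k[x_1,\dots,x_n]$ and let $m$ be a monomial which is a $p$-socle for $B$. Assume that for every variable $x_q$ dividing $m$, neither $m\frac{x_{q+1}}{x_q}$ (when $q<n$) nor $\frac{m}{x_q}$ is a $p$-socle for $B$. Then $mx_p\in\mathrm{Bgens}(B)$.
   Context: A Borel ideal is a monomial ideal closed under Borel moves $m\mapsto m\frac{x_{i_1}}{x_{j_1}}\cdots\frac{x_{i_s}}{x_{j_s}}$ ($i_t<j_t$, all $x_{j_t}\mid m$). $\mathrm{Bgens}(B)$ is the unique minimal set $T$ of monomials with $B$ equal to the smallest Borel ideal containing $T$. A monomial $m$ is a $p$-socle for $B$ if $\operatorname{Ann}_{S/B}(m)=(B:m)=(x_1,\dots,x_p)$. *)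

theory Defs
  imports Main "HOL-Library.Function_Algebras"
begin

text \<open>Monomials of S = k[x_1,...,x_n] are represented by exponent vectors
  a :: nat \<Rightarrow> nat supported on {1..n}; multiplication is addition,
  divisibility is the pointwise order. A monomial ideal is represented by
  its set of monomials.\<close>

type_synonym monom = "nat \<Rightarrow> nat"

definition mono :: "nat \<Rightarrow> monom set" where
  "mono n = {a. \<forall>k. a k \<noteq> 0 \<longrightarrow> k \<in> {1..n}}"

definition var :: "nat \<Rightarrow> monom" where
  "var i = (\<lambda>k. if k = i then 1 else 0)"

definition monomial_ideal :: "nat \<Rightarrow> monom set \<Rightarrow> bool" where
  "monomial_ideal n I \<longleftrightarrow> I \<subseteq> mono n \<and>
     (\<forall>a\<in>I. \<forall>b\<in>mono n. a \<le> b \<longrightarrow> b \<in> I)"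

text \<open>A Borel move m \<mapsto> m (x_{i_1}/x_{j_1}) ... (x_{i_s}/x_{j_s}) given by the
  list of pairs (i_t, j_t); admissible if i_t < j_t and x_{j_1}...x_{j_s} divides m.\<close>

definition admissible_move :: "nat \<Rightarrow> monom \<Rightarrow> (nat \<times> nat) list \<Rightarrow> bool" where
  "admissible_move n m ps \<longleftrightarrow>
     (\<forall>(i, j) \<in> set ps. 1 \<le> i \<and> i < j \<and> j \<le> n) \<and>
     (\<Sum>(i, j)\<leftarrow>ps. var j) \<le> m"

definition borel_move :: "monom \<Rightarrow> (nat \<times> nat) list \<Rightarrow> monom" where
  "borel_move m ps = m + (\<Sum>(i, j)\<leftarrow>ps. var i) - (\<Sum>(i, j)\<leftarrow>ps. var j)"

definition borel_ideal :: "nat \<Rightarrow> monom set \<Rightarrow> bool" where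
  "borel_ideal n B \<longleftrightarrow> monomial_ideal n B \<and>
     (\<forall>m\<in>B. \<forall>ps. admissible_move n m ps \<longrightarrow> borel_move m ps \<in> B)"

definition borel_gen :: "nat \<Rightarrow> monom set \<Rightarrow> monom set" where
  "borel_gen n T = \<Inter>{B. borel_ideal n B \<and> T \<subseteq> B}"

definition Bgens :: "nat \<Rightarrow> monom set \<Rightarrow> monom set" where
  "Bgens n B = (THE T. borel_gen n T = B \<and> (\<forall>T'. T' \<subset> T \<longrightarrow> borel_gen n T' \<noteq> B))"

text \<open>(B : m) = (x_1, ..., x_p), compared as monomial ideals (sets of monomials).\<close>
definition p_socle :: "nat \<Rightarrow> monom set \<Rightarrow> nat \<Rightarrow> monom \<Rightarrow> bool" where
  "p_socle n B p m \<longleftrightarrow> m \<in> mono n \<and>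
     {u \<in> mono n. u + m \<in> B} = {u \<in> mono n. \<exists>i\<in>{1..p}. 0 < u i}"

end

theory Submission
  imports Defs
begin

(* For a Borel ideal B, the minimal Borel generators are exactly the
   "removable" elements g of B, i.e. those for which B - {g} is still a Borel ideal:
   every generating set must contain them, and they generate B, because every
   non-removable element arises from an element of strictly smaller weight
   (sum of (n+1-k) * exponent of x_k) by a multiplication or a Borel move.
   Next, g is removable as soon as neither a divisor g/x_q nor an elementary
   predecessor g x_{i+1}/x_i lies in B; an arbitrary Borel move onto g can be
   shortened to one ending in such an elementary predecessor.
   Finally, for a p-socle m, a predecessor of m x_p of either kind that lies in B
   is (up to the trivial cases) of the form m' x_p with m' = m/x_q or
   m' = m x_{q+1}/x_q, and since (B : m') contains (B : m) and x_p, m' would again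
   be a p-socle, which the hypotheses forbid.  Hence m x_p is removable, i.e. a
   minimal Borel generator. *)

lemma mono_add: "f \<in> mono n \<Longrightarrow> g \<in> mono n \<Longrightarrow> f + g \<in> mono n"
  by (auto simp: mono_def)

lemma mono_var: "1 \<le> i \<Longrightarrow> i \<le> n \<Longrightarrow> var i \<in> mono n"
  by (auto simp: mono_def var_def)

lemma mono_diff: "f \<in> mono n \<Longrightarrow> f - g \<in> mono n"
  by (auto simp: mono_def)

lemma borel_ideal_mono: "borel_ideal n B \<Longrightarrow> B \<subseteq> mono n"
  by (auto simp: borel_ideal_def monomial_ideal_def)

lemma borel_ideal_up_closed:
  "borel_ideal n B \<Longrightarrow> x \<in> B \<Longrightarrow> y \<in> mono n \<Longrightarrow> x \<le> y \<Longrightarrow> y \<in> B"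
  by (auto simp: borel_ideal_def monomial_ideal_def)

lemma borel_ideal_move_closed:
  "borel_ideal n B \<Longrightarrow> x \<in> B \<Longrightarrow> admissible_move n x ps \<Longrightarrow> borel_move x ps \<in> B"
  by (auto simp: borel_ideal_def)

subsection \<open>A weight that increases along divisibility and Borel moves\<close>

text \<open>Weighting x_k by n+1-k makes every Borel move x_j \<mapsto> x_i (i < j) and every
  proper multiplication strictly increase the weight; this is the measure for the
  well-founded induction showing that removable elements generate B.\<close>

definition weight :: "nat \<Rightarrow> monom \<Rightarrow> nat" where
  "weight n f = (\<Sum>k\<in>{1..n}. (Suc n - k) * f k)"

lemma weight_add: "weight n (f + g) = weight n f + weight n g"
  by (simp add: weight_def sum.distrib algebra_simps)

lemma weight_var: "1 \<le> i \<Longrightarrow> i \<le> n \<Longrightarrow> weight n (var i) = Suc n - i"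
  by (simp add: weight_def var_def if_distrib sum.delta cong: if_cong)

lemma weight_move_pairs:
  assumes "\<forall>(i, j) \<in> set ps. 1 \<le> i \<and> i < j \<and> j \<le> n" "ps \<noteq> []"
  shows "weight n (\<Sum>(i, j)\<leftarrow>ps. var j) < weight n (\<Sum>(i, j)\<leftarrow>ps. var i)"
  using assms
proof (induction ps)
  case Nil
  then show ?case by simp
next
  case (Cons x ps)
  obtain i j where x: "x = (i, j)" by force
  with Cons.prems have ij: "1 \<le> i" "i < j" "j \<le> n" by auto
  have rest: "weight n (\<Sum>(i, j)\<leftarrow>ps. var j) \<le> weight n (\<Sum>(i, j)\<leftarrow>ps. var i)"
    using Cons by (cases "ps = []") auto
  have "weight n (var j) < weight n (var i)"
    using ij by (simp add: weight_var)
  with rest show ?case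
    by (simp only: x list.map sum_list.Cons prod.case weight_add)
qed

lemma weight_strict_mono:
  assumes "a \<le> b" "a \<noteq> b" "b \<in> mono n"
  shows "weight n a < weight n b"
proof -
  obtain k where "a k \<noteq> b k" using assms(2) by auto
  with assms(1) have lt: "a k < b k" by (metis le_funD order_le_neq_trans)
  with assms(3) have "k \<in> {1..n}" by (auto simp: mono_def)
  then show ?thesis unfolding weight_def
    using assms(1) lt by (intro sum_strict_mono_ex1) (auto simp: le_fun_def)
qed

lemma weight_borel_move:
  assumes "admissible_move n a ps" "borel_move a ps \<noteq> a"
  shows "weight n a < weight n (borel_move a ps)"
proof -
  let ?I = "(\<Sum>(i, j)\<leftarrow>ps. var i) :: monom"
  let ?J = "(\<Sum>(i, j)\<leftarrow>ps. var j) :: monom"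
  have J: "?J \<le> a" and rng: "\<forall>(i, j) \<in> set ps. 1 \<le> i \<and> i < j \<and> j \<le> n"
    using assms(1) by (auto simp: admissible_move_def)
  have "ps \<noteq> []" using assms(2) by (auto simp: borel_move_def)
  have "borel_move a ps + ?J = a + ?I"
  proof (rule ext)
    fix k
    have "?J k \<le> a k" using J by (simp add: le_fun_def)
    then show "(borel_move a ps + ?J) k = (a + ?I) k" by (simp add: borel_move_def)
  qed
  then have "weight n (borel_move a ps) + weight n ?J = weight n a + weight n ?I"
    by (metis weight_add)
  with weight_move_pairs[OF rng \<open>ps \<noteq> []\<close>] show ?thesis by linarith
qed

subsection \<open>Minimal Borel generators are the removable elements\<close>

definition removable :: "nat \<Rightarrow> monom set \<Rightarrow> monom set" where
  "removable n B = {g \<in> B. borel_ideal n (B - {g})}"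

lemma borel_gen_least: "borel_ideal n C \<Longrightarrow> T \<subseteq> C \<Longrightarrow> borel_gen n T \<subseteq> C"
  unfolding borel_gen_def by blast

text \<open>A removable element lies in every generating set: otherwise B - {g} would
  be a smaller Borel ideal containing the generators.\<close>
lemma removable_in_generators:
  assumes "borel_gen n T = B" "g \<in> removable n B"
  shows "g \<in> T"
proof (rule ccontr)
  assume "g \<notin> T"
  have "T \<subseteq> borel_gen n T" unfolding borel_gen_def by blast
  with assms \<open>g \<notin> T\<close> have "T \<subseteq> B - {g}" by auto
  with assms(2) have "borel_gen n T \<subseteq> B - {g}"
    by (intro borel_gen_least) (auto simp: removable_def)
  with assms show False by (auto simp: removable_def)
qed

lemma nonremovable_lighter_predecessor:
  assumes B: "borel_ideal n B" and b: "b \<in> B" "\<not> borel_ideal n (B - {b})"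
  shows "\<exists>a\<in>B. weight n a < weight n b \<and> (\<forall>C. borel_ideal n C \<longrightarrow> a \<in> C \<longrightarrow> b \<in> C)"
proof (cases "\<forall>a\<in>B - {b}. \<forall>c\<in>mono n. a \<le> c \<longrightarrow> c \<in> B - {b}")
  case True
  with b borel_ideal_mono[OF B] obtain a ps where
    a: "a \<in> B - {b}" "admissible_move n a ps" "borel_move a ps \<notin> B - {b}"
    unfolding borel_ideal_def monomial_ideal_def by blast
  then have ab: "borel_move a ps = b"
    using borel_ideal_move_closed[OF B] by blast
  with a weight_borel_move[OF a(2)] have "weight n a < weight n b" by auto
  with a ab show ?thesis
    by (metis DiffD1 borel_ideal_move_closed)
next
  case False
  then obtain a c where a: "a \<in> B - {b}" "c \<in> mono n" "a \<le> c" "c \<notin> B - {b}"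
    by blast
  then have "c = b" using borel_ideal_up_closed[OF B] by blast
  with a have "weight n a < weight n b" by (auto intro: weight_strict_mono)
  with a \<open>c = b\<close> show ?thesis
    by (metis DiffD1 borel_ideal_up_closed)
qed

lemma borel_gen_removable:
  assumes B: "borel_ideal n B"
  shows "borel_gen n (removable n B) = B"
proof
  show "borel_gen n (removable n B) \<subseteq> B"
    using B by (intro borel_gen_least) (auto simp: removable_def)
next
  have "b \<in> C" if C: "borel_ideal n C" "removable n B \<subseteq> C" and "b \<in> B" for C b
    using \<open>b \<in> B\<close>
  proof (induction b rule: measure_induct_rule[where f = "weight n"])
    case (less b)
    show ?case
    proof (cases "borel_ideal n (B - {b})")
      case True
      with less.prems C show ?thesis by (auto simp: removable_def)
    next
      case False
      with nonremovable_lighter_predecessor[OF B less.prems] less.IH C show ?thesis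
        by blast
    qed
  qed
  then show "B \<subseteq> borel_gen n (removable n B)"
    unfolding borel_gen_def by blast
qed

theorem Bgens_eq_removable:
  assumes "borel_ideal n B"
  shows "Bgens n B = removable n B"
  unfolding Bgens_def
proof (rule the_equality)
  show "borel_gen n (removable n B) = B \<and>
        (\<forall>T'. T' \<subset> removable n B \<longrightarrow> borel_gen n T' \<noteq> B)"
    using borel_gen_removable[OF assms] removable_in_generators by blast
next
  fix T assume T: "borel_gen n T = B \<and> (\<forall>T'. T' \<subset> T \<longrightarrow> borel_gen n T' \<noteq> B)"
  then have "removable n B \<subseteq> T" using removable_in_generators by blast
  with T borel_gen_removable[OF assms] show "T = removable n B" by blast
qed

subsection \<open>A criterion for removability\<close>

text \<open>Any nontrivial Borel move x \<mapsto> a inside B can be shortened: replacing one pair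
  (i, j) by (i+1, j), or dropping it when j = i+1, yields the elementary predecessor
  a x_{i+1}/x_i, which therefore also lies in B.\<close>
lemma borel_move_elementary_predecessor:
  assumes B: "borel_ideal n B" and x: "x \<in> B"
    and adm: "admissible_move n x ps" and mv: "borel_move x ps = a" and "ps \<noteq> []"
  shows "\<exists>i. 1 \<le> i \<and> i < n \<and> 0 < a i \<and> a + var (i + 1) - var i \<in> B"
proof -
  obtain i j where ij: "(i, j) \<in> set ps"
    using \<open>ps \<noteq> []\<close> by (metis list.set_intros(1) surj_pair neq_Nil_conv)
  let ?R = "remove1 (i, j) ps"
  let ?IR = "(\<Sum>(i, j)\<leftarrow>?R. var i) :: monom"
  let ?JR = "(\<Sum>(i, j)\<leftarrow>?R. var j) :: monom"
  have rng: "\<forall>(i, j) \<in> set ps. 1 \<le> i \<and> i < j \<and> j \<le> n"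
    and J: "(\<Sum>(i, j)\<leftarrow>ps. var j) \<le> x"
    using adm by (auto simp: admissible_move_def)
  have ijr: "1 \<le> i" "i < j" "j \<le> n" using rng ij by auto
  have Rsub: "set ?R \<subseteq> set ps" by (rule set_remove1_subset)
  have eI: "(\<Sum>(i, j)\<leftarrow>ps. var i) = var i + ?IR"
    using sum_list_map_remove1[OF ij, of "\<lambda>(i, j). var i"] by simp
  have eJ: "(\<Sum>(i, j)\<leftarrow>ps. var j) = var j + ?JR"
    using sum_list_map_remove1[OF ij, of "\<lambda>(i, j). var j"] by simp
  have Jk: "\<And>k. var j k + ?JR k \<le> x k" using J eJ by (metis le_funD plus_fun_apply)
  have ak: "\<And>k. a k = x k + var i k + ?IR k - (var j k + ?JR k)"
    using mv eI eJ by (auto simp: borel_move_def)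
  have ai: "0 < a i" using ak[of i] Jk[of i] by (simp add: var_def)
  have "a + var (i + 1) - var i \<in> B"
  proof (cases "i + 1 < j")
    case True
    let ?ps = "(i + 1, j) # ?R"
    have adm': "admissible_move n x ?ps"
      using True ijr rng Rsub J eJ by (auto simp: admissible_move_def)
    have "borel_move x ?ps k = (a + var (i + 1) - var i) k" for k
      using ak[of k] Jk[of k] by (auto simp: borel_move_def var_def)
    then have "borel_move x ?ps = a + var (i + 1) - var i" by blast
    then show ?thesis using borel_ideal_move_closed[OF B x adm'] by simp
  next
    case False
    then have j: "j = i + 1" using ijr by simp
    have "?JR \<le> x" using Jk by (auto simp: le_fun_def intro: le_trans[OF le_add2])
    then have adm': "admissible_move n x ?R"
      using rng Rsub by (auto simp: admissible_move_def)
    have "borel_move x ?R k = (a + var (i + 1) - var i) k" for k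
      using ak[of k] Jk[of k] j by (auto simp: borel_move_def var_def)
    then have "borel_move x ?R = a + var (i + 1) - var i" by blast
    then show ?thesis using borel_ideal_move_closed[OF B x adm'] by simp
  qed
  with ijr ai show ?thesis by auto
qed

lemma removable_if_no_predecessor:
  assumes B: "borel_ideal n B" and aB: "a \<in> B"
    and no_divisor: "\<And>q. 0 < a q \<Longrightarrow> a - var q \<notin> B"
    and no_shift: "\<And>i. 1 \<le> i \<Longrightarrow> i < n \<Longrightarrow> 0 < a i \<Longrightarrow> a + var (i + 1) - var i \<notin> B"
  shows "a \<in> removable n B"
proof -
  have am: "a \<in> mono n" using aB borel_ideal_mono[OF B] by auto
  have up: "y \<noteq> a" if x: "x \<in> B - {a}" and "x \<le> y" for x y
  proof
    assume "y = a"
    with x \<open>x \<le> y\<close> obtain q where q: "x q < a q"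
      by (metis DiffE ext insertI1 le_funD order_le_neq_trans)
    with \<open>x \<le> y\<close> \<open>y = a\<close> have "x \<le> a - var q" by (auto simp: le_fun_def var_def)
    then have "a - var q \<in> B"
      using borel_ideal_up_closed[OF B _ mono_diff[OF am]] x by auto
    with no_divisor[of q] q show False by simp
  qed
  have move: "borel_move x ps \<noteq> a" if x: "x \<in> B - {a}" and adm: "admissible_move n x ps"
    for x ps
  proof
    assume mv: "borel_move x ps = a"
    with x have "ps \<noteq> []" by (auto simp: borel_move_def)
    with borel_move_elementary_predecessor[OF B _ adm mv] x no_shift show False by auto
  qed
  have "borel_ideal n (B - {a})"
    unfolding borel_ideal_def monomial_ideal_def
  proof (intro conjI ballI allI impI)
    show "B - {a} \<subseteq> mono n" using borel_ideal_mono[OF B] by auto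
  next
    fix x y assume "x \<in> B - {a}" "y \<in> mono n" "x \<le> y"
    then show "y \<in> B - {a}" using up borel_ideal_up_closed[OF B] by blast
  next
    fix x ps assume "x \<in> B - {a}" "admissible_move n x ps"
    then show "borel_move x ps \<in> B - {a}" using move borel_ideal_move_closed[OF B] by blast
  qed
  with aB show ?thesis by (simp add: removable_def)
qed

subsection \<open>p-socles\<close>

lemma p_socle_mem_iff:
  "p_socle n B p m \<Longrightarrow> u \<in> mono n \<Longrightarrow> u + m \<in> B \<longleftrightarrow> (\<exists>i\<in>{1..p}. 0 < u i)"
  unfolding p_socle_def by blast

lemma p_socle_not_mem: "p_socle n B p m \<Longrightarrow> m \<notin> B"
  using p_socle_mem_iff[of n B p m 0] by (auto simp: mono_def)

lemma p_socle_times_var_mem: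
  "p_socle n B p m \<Longrightarrow> 1 \<le> p \<Longrightarrow> p \<le> n \<Longrightarrow> m + var p \<in> B"
  using p_socle_mem_iff[of n B p m "var p"] mono_var[of p n]
  by (auto simp: var_def add.commute)

text \<open>If m is a p-socle and m' satisfies (B : m') \<subseteq> (B : m) = (x_1,...,x_p) and
  x_p \<in> (B : m'), then m' is a p-socle too: by the Borel property x_p \<in> (B : m')
  already gives x_1, ..., x_p \<in> (B : m').\<close>
lemma p_socle_transfer:
  assumes B: "borel_ideal n B" and p: "1 \<le> p" "p \<le> n" and s: "p_socle n B p m"
    and m': "m' \<in> mono n" "m' + var p \<in> B"
    and colon: "\<And>u. u \<in> mono n \<Longrightarrow> u + m' \<in> B \<Longrightarrow> u + m \<in> B"
  shows "p_socle n B p m'"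
  unfolding p_socle_def
proof (intro conjI m'(1) set_eqI iffI)
  fix u assume "u \<in> {u \<in> mono n. u + m' \<in> B}"
  then show "u \<in> {u \<in> mono n. \<exists>i\<in>{1..p}. 0 < u i}"
    using colon p_socle_mem_iff[OF s] by auto
next
  fix u assume "u \<in> {u \<in> mono n. \<exists>i\<in>{1..p}. 0 < u i}"
  then obtain i where u: "u \<in> mono n" "i \<in> {1..p}" "0 < u i" by auto
  have vi: "var i + m' \<in> B"
  proof (cases "i = p")
    case True
    then show ?thesis using m' by (simp add: add.commute)
  next
    case False
    then have "i < p" using u by auto
    then have adm: "admissible_move n (m' + var p) [(i, p)]"
      using u p by (auto simp: admissible_move_def le_fun_def)
    have "borel_move (m' + var p) [(i, p)] = var i + m'"
      by (rule ext) (auto simp: borel_move_def var_def)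
    with borel_ideal_move_closed[OF B m'(2) adm] show ?thesis by simp
  qed
  have "var i + m' \<le> u + m'" using u by (auto simp: le_fun_def var_def)
  then have "u + m' \<in> B"
    using borel_ideal_up_closed[OF B vi] mono_add[OF u(1) m'(1)] by blast
  with u show "u \<in> {u \<in> mono n. u + m' \<in> B}" by auto
qed

text \<open>If no divisor m/x_q is a p-socle, then no divisor of m x_p lies in B.
  The divisor m itself is excluded since a p-socle is not in B.\<close>
lemma p_socle_no_divisor_predecessor:
  assumes B: "borel_ideal n B" and p: "1 \<le> p" "p \<le> n" and s: "p_socle n B p m"
    and no_socle: "\<And>q. q \<in> {1..n} \<Longrightarrow> 0 < m q \<Longrightarrow> \<not> p_socle n B p (m - var q)"
    and q: "0 < (m + var p) q"
  shows "m + var p - var q \<notin> B"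
proof
  assume d: "m + var p - var q \<in> B"
  have mm: "m \<in> mono n" using s by (simp add: p_socle_def)
  show False
  proof (cases "q = p")
    case True
    then have "m + var p - var q = m" by (auto simp: var_def)
    with d p_socle_not_mem[OF s] show False by simp
  next
    case False
    with q have mq: "0 < m q" by (simp add: var_def)
    with mm have qn: "q \<in> {1..n}" by (auto simp: mono_def)
    have "m + var p - var q = (m - var q) + var p"
      using mq False by (auto simp: var_def)
    with d have "(m - var q) + var p \<in> B" by simp
    moreover have "u + m \<in> B" if "u \<in> mono n" "u + (m - var q) \<in> B" for u
      using that by (intro borel_ideal_up_closed[OF B _ mono_add[OF that(1) mm]])
        (auto simp: le_fun_def)
    ultimately have "p_socle n B p (m - var q)"
      using p_socle_transfer[OF B p s mono_diff[OF mm]] by blast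
    with no_socle qn mq show False by blast
  qed
qed

text \<open>The shift (m x_p) x_{p+1}/x_p = m x_{p+1}, where x_p does not
  divide m, is excluded since x_{p+1} \<notin> (B : m).\<close>
lemma p_socle_no_shift_predecessor:
  assumes B: "borel_ideal n B" and p: "1 \<le> p" "p \<le> n" and s: "p_socle n B p m"
    and no_socle: "\<And>i. i \<in> {1..n} \<Longrightarrow> i < n \<Longrightarrow> 0 < m i \<Longrightarrow>
                         \<not> p_socle n B p (m + var (i + 1) - var i)"
    and i: "1 \<le> i" "i < n" "0 < (m + var p) i"
  shows "m + var p + var (i + 1) - var i \<notin> B"
proof
  assume y: "m + var p + var (i + 1) - var i \<in> B"
  have mm: "m \<in> mono n" using s by (simp add: p_socle_def)
  show False
  proof (cases "i = p \<and> m p = 0")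
    case True
    then have "m + var p + var (i + 1) - var i = var (p + 1) + m"
      by (auto simp: var_def)
    moreover have "var (p + 1) \<in> mono n" using i True by (intro mono_var) auto
    ultimately show False
      using p_socle_mem_iff[OF s, of "var (p + 1)"] y by (auto simp: var_def)
  next
    case False
    with i have mi: "0 < m i" by (cases "i = p") (auto simp: var_def)
    define m' where "m' = m + var (i + 1) - var i"
    have m'm: "m' \<in> mono n" unfolding m'_def
      using i by (intro mono_diff mono_add[OF mm] mono_var) auto
    have "m + var p + var (i + 1) - var i = m' + var p"
      using mi by (auto simp: m'_def var_def)
    with y have "m' + var p \<in> B" by simp
    moreover have "u + m \<in> B" if u: "u \<in> mono n" "u + m' \<in> B" for u
    proof -
      have adm: "admissible_move n (u + m') [(i, i + 1)]"
        using i by (auto simp: admissible_move_def le_fun_def m'_def var_def)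
      have "borel_move (u + m') [(i, i + 1)] = u + m"
        using mi by (auto simp: borel_move_def m'_def var_def)
      with borel_ideal_move_closed[OF B u(2) adm] show ?thesis by simp
    qed
    ultimately have "p_socle n B p m'"
      using p_socle_transfer[OF B p s m'm] by blast
    with no_socle i mi show False unfolding m'_def by auto
  qed
qed

theorem lemma3p5:
  fixes n p :: nat and B :: "monom set" and m :: monom
  assumes "borel_ideal n B"
    and "1 \<le> p" and "p \<le> n"
    and "p_socle n B p m"
    and "\<forall>q\<in>{1..n}. 0 < m q \<longrightarrow>
           (q < n \<longrightarrow> \<not> p_socle n B p (m + var (q + 1) - var q)) \<and>
           \<not> p_socle n B p (m - var q)"
  shows "m + var p \<in> Bgens n B"
proof -
  note B = assms(1) and p = assms(2,3) and s = assms(4)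
  have "m + var p \<in> removable n B"
  proof (rule removable_if_no_predecessor[OF B p_socle_times_var_mem[OF s p]])
    fix q assume "0 < (m + var p) q"
    with assms(5) show "m + var p - var q \<notin> B"
      by (intro p_socle_no_divisor_predecessor[OF B p s]) auto
  next
    fix i assume "1 \<le> i" "i < n" "0 < (m + var p) i"
    with assms(5) show "m + var p + var (i + 1) - var i \<notin> B"
      by (intro p_socle_no_shift_predecessor[OF B p s]) auto
  qed
  with Bgens_eq_removable[OF B] show ?thesis by simp
qed

end
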